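(* Let $\rho$ be an $n$-qubit density matrix, let $P^{(1)},\dots,P^{(L)}\in\{I,X,Y,Z\}^n$ be Pauli operators with $w_l=\mathrm{Tr}(P^{(l)}\rho)$, and let $\beta$ be a probability distribution on $\mathcal{P}^n$ with $\zeta(P^{(l)},\beta)>0$ for all $l$ (e.g. the distribution given by a decision diagram compatible with these operators). Draw $B^{(1)},\dots,B^{(M)}$ i.i.d. from $\beta$ and measure a fresh copy of $\rho$ in each basis $B^{(m)}$. Let $M_l=\sum_{m=1}^M\mathbbm{1}_{\mathrm{Lift}(P^{(l)})}(B^{(m)})$ and $\hat w_l=\frac1{M_l}\sum_{m:\,B^{(m)}\in\mathrm{Lift}(P^{(l)})}\mu(B^{(m)},\mathrm{supp}(P^{(l)}))$ (with $\hat w_l=0$ if $M_l=0$). Fix $\epsilon\in(0,1)$, $\delta\in(0,1)$, set $\eta=1-e^{-\epsilon^2/2}$, and let $\mathrm{INCONF}_\epsilon(\mathbf{B})=\Pr\big[\max_{1\le l\le L}|\hat w_l-w_l|\ge\epsilon \,\big|\, B^{(1)},\dots,B^{(M)}\big]$ (probability over measurement outcomes given the bases). Then \[ \mathbb{E}_{\mathbf{B}}\big(\mathrm{INCONF}_\epsilon(\mathbf{B})\big)\le 2\sum_{l=1}^L\big(1-\eta\,\zeta(P^{(l)},\beta)\big)^M\le 2\sum_{l=1}^L e^{-\eta\,\zeta(P^{(l)},\beta)\,M}, \] and consequently $\mathbb{E}_{\mathbf{B}}(\mathrm{INCONF}_\epsilon(\mathbf{B}))\le\delta$ whenever $M\g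e\frac{\ln(2L/\delta)}{\eta}\max_{l}\frac{1}{\zeta(P^{(l)},\beta)}$.
   Context: $I,X,Y,Z$ are Pauli matrices, $\mathcal{P}=\{X,Y,Z\}$, $\mathrm{supp}(P)=\{i:P_i\neq I\}$, $\mathrm{Lift}(P)=\{B\in\mathcal{P}^n: B_i=P_i\ \forall i\in\mathrm{supp}(P)\}$, $\zeta(P,\beta)=\sum_{B\in\mathrm{Lift}(P)}\beta(B)$. Measuring $\rho$ in basis $B\in\mathcal{P}^n$ means measuring each qubit $i$ in the eigenbasis of $B_i$, giving $\mu(B,i)\in\{\pm1\}$ with joint law $\Pr[\mu(B,i)=s_i\,\forall i]=\mathrm{Tr}(\rho\bigotimes_i\frac{I+s_iB_i}{2})$; $\mu(B,A)=\prod_{i\in A}\mu(B,i)$, $\mu(B,\varnothing)=1$. Measurement outcomes for different $m$ are independent given the bases. *)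

theory Defs
  imports "Jordan_Normal_Form.Schur_Decomposition" "HOL-Probability.Probability"
begin

datatype pauli = PI | PX | PY | PZ

definition pauli_mat :: "pauli \<Rightarrow> complex mat" where
  "pauli_mat p = (case p of
      PI \<Rightarrow> 1\<^sub>m 2
    | PX \<Rightarrow> Matrix.mat 2 2 (\<lambda>(r,c). if r \<noteq> c then 1 else 0)
    | PY \<Rightarrow> Matrix.mat 2 2 (\<lambda>(r,c). if r = 0 \<and> c = 1 then - \<i> else if r = 1 \<and> c = 0 then \<i> else 0)
    | PZ \<Rightarrow> Matrix.mat 2 2 (\<lambda>(r,c). if r = c then (if r = 0 then 1 else -1) else 0))"

(* n-fold tensor product of 2x2 matrices F 0, ..., F (n-1); qubit i corresponds to bit i
   of the row/column index. *)
definition ptensor :: "nat \<Rightarrow> (nat \<Rightarrow> complex mat) \<Rightarrow> complex mat" where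
  "ptensor n F = Matrix.mat (2^n) (2^n)
     (\<lambda>(r,c). \<Prod>i<n. F i $$ (r div 2^i mod 2, c div 2^i mod 2))"

definition pauli_op :: "pauli list \<Rightarrow> complex mat" where
  "pauli_op P = ptensor (length P) (\<lambda>i. pauli_mat (P ! i))"

definition mtrace :: "complex mat \<Rightarrow> complex" where
  "mtrace A = (\<Sum>i<dim_row A. A $$ (i,i))"

definition density_matrix :: "nat \<Rightarrow> complex mat \<Rightarrow> bool" where
  "density_matrix n \<rho> \<longleftrightarrow> \<rho> \<in> carrier_mat (2^n) (2^n) \<and> mat_adjoint \<rho> = \<rho> \<and>
     (\<forall>v \<in> carrier_vec (2^n). 0 \<le> Re (conjugate v \<bullet> (\<rho> *\<^sub>v v))) \<and> mtrace \<rho> = 1"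

definition bases :: "nat \<Rightarrow> pauli list set" where
  "bases n = {B. length B = n \<and> set B \<subseteq> {PX, PY, PZ}}"

definition supp :: "pauli list \<Rightarrow> nat set" where
  "supp P = {i. i < length P \<and> P ! i \<noteq> PI}"

definition Lift :: "pauli list \<Rightarrow> pauli list set" where
  "Lift P = {B \<in> bases (length P). \<forall>i \<in> supp P. B ! i = P ! i}"

definition zeta :: "pauli list \<Rightarrow> pauli list pmf \<Rightarrow> real" where
  "zeta P \<beta> = (\<Sum>B\<in>Lift P. pmf \<beta> B)"

definition outcomes :: "nat \<Rightarrow> int list set" where
  "outcomes n = {s. length s = n \<and> set s \<subseteq> {-1, 1}}"

(* Pr[mu(B,i) = s_i for all i] = Tr(rho \<otimes>_i (I + s_i B_i)/2) *)
definition outcome_prob :: "complex mat \<Rightarrow> pauli list \<Rightarrow> int list \<Rightarrow> real" where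
  "outcome_prob \<rho> B s = Re (mtrace (\<rho> * ptensor (length B)
      (\<lambda>i. (1/2 :: complex) \<cdot>\<^sub>m (1\<^sub>m 2 + of_int (s ! i) \<cdot>\<^sub>m pauli_mat (B ! i)))))"

(* mu(B,A) = prod_{i in A} mu(B,i), given the outcome vector s of measuring in B *)
definition mu :: "int list \<Rightarrow> nat set \<Rightarrow> real" where
  "mu s A = (\<Prod>i\<in>A. real_of_int (s ! i))"

definition lift_count :: "nat \<Rightarrow> (nat \<Rightarrow> pauli list) \<Rightarrow> pauli list \<Rightarrow> nat" where
  "lift_count M Bs P = card {m \<in> {..<M}. Bs m \<in> Lift P}"

definition w_hat :: "nat \<Rightarrow> (nat \<Rightarrow> pauli list) \<Rightarrow> (nat \<Rightarrow> int list) \<Rightarrow> pauli list \<Rightarrow> real" where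
  "w_hat M Bs ss P = (if lift_count M Bs P = 0 then 0
      else (1 / real (lift_count M Bs P)) *
           (\<Sum>m\<in>{m \<in> {..<M}. Bs m \<in> Lift P}. mu (ss m) (supp P)))"

definition INCONF :: "nat \<Rightarrow> complex mat \<Rightarrow> nat \<Rightarrow> (nat \<Rightarrow> pauli list) \<Rightarrow> real \<Rightarrow> nat \<Rightarrow> (nat \<Rightarrow> pauli list) \<Rightarrow> real" where
  "INCONF n \<rho> L Ps eps M Bs =
     (\<Sum>ss \<in> PiE {..<M} (\<lambda>_. outcomes n).
        (\<Prod>m<M. outcome_prob \<rho> (Bs m) (ss m)) *
        (if (MAX l\<in>{..<L}. cmod (complex_of_real (w_hat M Bs ss (Ps l)) - mtrace (pauli_op (Ps l) * \<rho>))) \<ge> eps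
         then 1 else 0))"

end

theory Submission
  imports Defs
begin

text \<open>
  Summed over the outcome t, the single-qubit eigenprojectors (I + t B_i)/2 give I, and
  weighted by t they give B_i. Hence for a basis B in Lift(P), weighting the outcome vectors
  by their signs on supp(P) reassembles P qubit by qubit: \<mu>(B, supp P) is a \<plusminus>1 variable with
  mean Tr(P\<rho>). Given the bases, w_hat is the mean of M_l independent such variables, so
  Hoeffding's inequality bounds the probability of an \<epsilon>-deviation by 2 q^(M_l) with
  q = exp(-\<epsilon>^2/2), and a union bound over l bounds INCONF. Finally M_l counts the successes of
  M independent trials with success probability \<zeta>(P_l, \<beta>), so E[q^(M_l)] = (1 - (1 - q)\<zeta>)^M,
  and (1 - x)^M \<le> exp(-xM) gives the remaining bounds.
\<close>

lemma finite_outcomes: "finite (outcomes n)"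
proof -
  have "outcomes n \<subseteq> {xs. set xs \<subseteq> {-1,1} \<and> length xs = n}" by (auto simp: outcomes_def)
  then show ?thesis using finite_lists_length_eq[of "{-1,1::int}" n] by (rule finite_subset) simp
qed

lemma outcomes_Suc: "outcomes (Suc n) = (\<lambda>(s,t). s @ [t]) ` (outcomes n \<times> {-1,1})"
proof
  show "outcomes (Suc n) \<subseteq> (\<lambda>(s,t). s @ [t]) ` (outcomes n \<times> {-1,1})"
  proof
    fix xs assume xs: "xs \<in> outcomes (Suc n)"
    then obtain ys y where "xs = ys @ [y]" by (cases xs rule: rev_cases) (auto simp: outcomes_def)
    with xs show "xs \<in> (\<lambda>(s,t). s @ [t]) ` (outcomes n \<times> {-1,1})"
      by (auto simp: outcomes_def image_iff)
  qed
qed (auto simp: outcomes_def)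

lemma sum_outcomes_prod:
  fixes f :: "nat \<Rightarrow> int \<Rightarrow> 'a::comm_semiring_1"
  shows "(\<Sum>s\<in>outcomes n. \<Prod>i<n. f i (s!i)) = (\<Prod>i<n. \<Sum>t\<in>{-1,1}. f i t)"
proof (induction n)
  case 0
  have "outcomes 0 = {[]}" by (auto simp: outcomes_def)
  then show ?case by simp
next
  case (Suc n)
  have inj: "inj_on (\<lambda>(s,t). s @ [t]) (outcomes n \<times> {-1,1::int})" by (auto simp: inj_on_def)
  have "(\<Sum>s\<in>outcomes (Suc n). \<Prod>i<Suc n. f i (s!i))
      = (\<Sum>(s,t)\<in>outcomes n \<times> {-1,1}. (\<Prod>i<n. f i (s!i)) * f n t)"
  proof -
    have "(\<Prod>i<Suc n. f i ((s @ [t])!i)) = (\<Prod>i<n. f i (s!i)) * f n t" if "length s = n" for s t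
      using that by (simp add: nth_append)
    then show ?thesis
      unfolding outcomes_Suc sum.reindex[OF inj] by (intro sum.cong refl) (auto simp: outcomes_def)
  qed
  also have "\<dots> = (\<Sum>s\<in>outcomes n. \<Prod>i<n. f i (s!i)) * (\<Sum>t\<in>{-1,1}. f n t)"
    by (simp only: sum_product sum.cartesian_product)
  finally show ?case by (simp add: Suc.IH)
qed

lemma nat_eq_if_low_bits_eq:
  "c < 2^n \<Longrightarrow> r < 2^n \<Longrightarrow> (\<forall>i<n. c div 2^i mod 2 = r div 2^i mod 2) \<Longrightarrow> c = (r::nat)"
proof (induction n arbitrary: c r)
  case 0 thus ?case by simp
next
  case (Suc n)
  have "c div 2 = r div 2"
  proof (rule Suc.IH)
    show "c div 2 < 2^n" "r div 2 < 2^n" using Suc.prems by auto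
    show "\<forall>i<n. c div 2 div 2^i mod 2 = r div 2 div 2^i mod 2"
      using Suc.prems(3) by (auto simp: div_mult2_eq)
  qed
  moreover have "c mod 2 = r mod 2" using Suc.prems(3) by (metis div_by_1 power_0 zero_less_Suc)
  ultimately show ?case by (metis div_mult_mod_eq)
qed

lemma ptensor_carrier: "ptensor n F \<in> carrier_mat (2^n) (2^n)"
  by (simp add: ptensor_def)

lemma ptensor_index: "r < 2^n \<Longrightarrow> c < 2^n \<Longrightarrow>
   ptensor n F $$ (r,c) = (\<Prod>i<n. F i $$ (r div 2^i mod 2, c div 2^i mod 2))"
  by (simp add: ptensor_def)

lemma ptensor_one: "ptensor n (\<lambda>_. 1\<^sub>m 2) = 1\<^sub>m (2^n)"
proof (rule eq_matI)
  fix r c assume "r < dim_row (1\<^sub>m (2^n) :: complex mat)" "c < dim_col (1\<^sub>m (2^n) :: complex mat)"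
  then have rc: "r < 2^n" "c < 2^n" by auto
  have "(\<Prod>i<n. 1\<^sub>m 2 $$ (r div 2^i mod 2, c div 2^i mod 2)) = (if r = c then 1 else (0::complex))"
  proof (cases "r = c")
    case False
    then obtain i where "i < n" "r div 2^i mod 2 \<noteq> c div 2^i mod 2"
      using nat_eq_if_low_bits_eq[OF rc] by blast
    then show ?thesis using False by auto
  qed simp
  then show "ptensor n (\<lambda>_. 1\<^sub>m 2) $$ (r,c) = 1\<^sub>m (2^n) $$ (r,c)"
    using rc by (simp add: ptensor_index)
qed (simp_all add: ptensor_def)

lemma mtrace_mult:
  assumes "A \<in> carrier_mat N N" "B \<in> carrier_mat N N"
  shows "mtrace (A * B) = (\<Sum>r<N. \<Sum>c<N. A $$ (r,c) * B $$ (c,r))"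
  using assms by (auto simp: mtrace_def scalar_prod_def atLeast0LessThan intro!: sum.cong)

lemma mtrace_mult_comm:
  assumes "A \<in> carrier_mat N N" "B \<in> carrier_mat N N"
  shows "mtrace (A * B) = mtrace (B * A)"
  using assms by (simp add: mtrace_mult mult.commute) (rule sum.swap)

lemma mtrace_mult_ptensor:
  assumes "A \<in> carrier_mat (2^n) (2^n)"
  shows "mtrace (A * ptensor n F)
    = (\<Sum>r<2^n. \<Sum>c<2^n. A $$ (r,c) * (\<Prod>i<n. F i $$ (c div 2^i mod 2, r div 2^i mod 2)))"
  using assms by (simp add: mtrace_mult ptensor_carrier ptensor_index)

lemma sum_outcomes_mtrace_ptensor:
  assumes A: "A \<in> carrier_mat (2^n) (2^n)"
    and G: "\<And>i a b. i < n \<Longrightarrow> a < 2 \<Longrightarrow> b < 2 \<Longrightarrow> (\<Sum>t\<in>{-1,1}. g i t * F i t $$ (a,b)) = G i $$ (a,b)"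
  shows "(\<Sum>s\<in>outcomes n. (\<Prod>i<n. g i (s!i)) * mtrace (A * ptensor n (\<lambda>i. F i (s!i))))
    = mtrace (A * ptensor n G)"
proof -
  have "(\<Sum>s\<in>outcomes n. (\<Prod>i<n. g i (s!i)) * mtrace (A * ptensor n (\<lambda>i. F i (s!i))))
      = (\<Sum>r<2^n. \<Sum>c<2^n. A $$ (r,c) *
          (\<Sum>s\<in>outcomes n. \<Prod>i<n. g i (s!i) * F i (s!i) $$ (c div 2^i mod 2, r div 2^i mod 2)))"
    by (simp add: mtrace_mult_ptensor[OF A] sum_distrib_left sum_distrib_right prod.distrib mult_ac)
       (subst sum.swap, rule sum.cong, simp, subst sum.swap, simp)
  also have "\<dots> = (\<Sum>r<2^n. \<Sum>c<2^n. A $$ (r,c) * (\<Prod>i<n. G i $$ (c div 2^i mod 2, r div 2^i mod 2)))"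
  proof (intro sum.cong refl arg_cong2[where f="(*)"])
    fix r c
    show "(\<Sum>s\<in>outcomes n. \<Prod>i<n. g i (s!i) * F i (s!i) $$ (c div 2^i mod 2, r div 2^i mod 2))
        = (\<Prod>i<n. G i $$ (c div 2^i mod 2, r div 2^i mod 2))"
      by (subst sum_outcomes_prod[of "\<lambda>i t. g i t * F i t $$ (c div 2^i mod 2, r div 2^i mod 2)"])
         (intro prod.cong refl G, auto)
  qed
  also have "\<dots> = mtrace (A * ptensor n G)"
    by (simp add: mtrace_mult_ptensor[OF A])
  finally show ?thesis .
qed

definition pauli_proj :: "pauli \<Rightarrow> int \<Rightarrow> complex mat" where
  "pauli_proj p t = (1/2) \<cdot>\<^sub>m (1\<^sub>m 2 + of_int t \<cdot>\<^sub>m pauli_mat p)"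

lemma outcome_prob_pauli_proj:
  "outcome_prob \<rho> B s = Re (mtrace (\<rho> * ptensor (length B) (\<lambda>i. pauli_proj (B!i) (s!i))))"
  by (simp add: outcome_prob_def pauli_proj_def)

lemma pauli_mat_carrier: "pauli_mat p \<in> carrier_mat 2 2"
  by (cases p) (auto simp: pauli_mat_def)

lemma pauli_mat_PI: "pauli_mat PI = 1\<^sub>m 2"
  by (simp add: pauli_mat_def)

lemma pauli_proj_index:
  "a < 2 \<Longrightarrow> b < 2 \<Longrightarrow>
   pauli_proj p t $$ (a,b) = ((if a = b then 1 else 0) + of_int t * pauli_mat p $$ (a,b)) / 2"
  using pauli_mat_carrier[of p] by (simp add: pauli_proj_def)

lemma sum_pauli_proj:
  "a < 2 \<Longrightarrow> b < 2 \<Longrightarrow> (\<Sum>t\<in>{-1,1}. pauli_proj p t $$ (a,b)) = 1\<^sub>m 2 $$ (a,b)"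
  by (simp add: pauli_proj_index add_divide_distrib[symmetric])

lemma sum_signed_pauli_proj:
  "a < 2 \<Longrightarrow> b < 2 \<Longrightarrow> (\<Sum>t\<in>{-1,1}. of_int t * pauli_proj p t $$ (a,b)) = pauli_mat p $$ (a,b)"
  by (simp add: pauli_proj_index field_simps)

definition pauli_eigvec :: "pauli \<Rightarrow> int \<Rightarrow> nat \<Rightarrow> complex" where
  "pauli_eigvec p t a = (case p of
      PX \<Rightarrow> (if a = 0 then 1 else of_int t) * of_real (sqrt (1/2))
    | PY \<Rightarrow> (if a = 0 then 1 else \<i> * of_int t) * of_real (sqrt (1/2))
    | PZ \<Rightarrow> (if (a = 0) = (t = 1) then 1 else 0)
    | PI \<Rightarrow> 0)"

lemma pauli_proj_rank_one:
  assumes "p \<noteq> PI" "t \<in> {-1,1}" "a < 2" "b < 2"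
  shows "pauli_proj p t $$ (a,b) = pauli_eigvec p t a * cnj (pauli_eigvec p t b)"
proof -
  have half: "x * complex_of_real (sqrt (1/2)) * (y * complex_of_real (sqrt (1/2))) = x * y / 2" for x y
    by (simp add: algebra_simps flip: of_real_mult)
  have "a = 0 \<or> a = 1" "b = 0 \<or> b = 1" using assms(3,4) by auto
  then show ?thesis using assms(1,2)
    by (cases p) (auto simp: pauli_proj_index pauli_eigvec_def pauli_mat_def half)
qed

lemma sum_outcome_prob:
  assumes rho: "density_matrix n \<rho>" and B: "length B = n"
  shows "(\<Sum>s\<in>outcomes n. outcome_prob \<rho> B s) = 1"
proof -
  have A: "\<rho> \<in> carrier_mat (2^n) (2^n)" and tr: "mtrace \<rho> = 1"
    using rho by (auto simp: density_matrix_def)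
  have "(\<Sum>s\<in>outcomes n. (\<Prod>i<n. 1) * mtrace (\<rho> * ptensor n (\<lambda>i. pauli_proj (B!i) (s!i))))
      = mtrace (\<rho> * ptensor n (\<lambda>_. 1\<^sub>m 2))"
    by (rule sum_outcomes_mtrace_ptensor[OF A]) (simp only: mult_1 sum_pauli_proj)
  then show ?thesis
    using A tr B by (simp add: outcome_prob_pauli_proj ptensor_one flip: Re_sum)
qed

lemma outcome_prob_nonneg:
  assumes rho: "density_matrix n \<rho>" and B: "B \<in> bases n" and s: "s \<in> outcomes n"
  shows "0 \<le> outcome_prob \<rho> B s"
proof -
  have A: "\<rho> \<in> carrier_mat (2^n) (2^n)" using rho by (auto simp: density_matrix_def)
  have lB: "length B = n" and Bi: "\<And>i. i < n \<Longrightarrow> B!i \<noteq> PI"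
    using B by (auto simp: bases_def dest!: nth_mem)
  have si: "\<And>i. i < n \<Longrightarrow> s!i \<in> {-1,1}" using s by (auto simp: outcomes_def dest!: nth_mem)
  define v where "v c = (\<Prod>i<n. pauli_eigvec (B!i) (s!i) (c div 2^i mod 2))" for c
  have rank_one: "(\<Prod>i<n. pauli_proj (B!i) (s!i) $$ (c div 2^i mod 2, r div 2^i mod 2)) = v c * cnj (v r)"
    for c r :: nat
  proof -
    have "(\<Prod>i<n. pauli_proj (B!i) (s!i) $$ (c div 2^i mod 2, r div 2^i mod 2))
        = (\<Prod>i<n. pauli_eigvec (B!i) (s!i) (c div 2^i mod 2) * cnj (pauli_eigvec (B!i) (s!i) (r div 2^i mod 2)))"
      by (intro prod.cong refl pauli_proj_rank_one Bi si) auto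
    then show ?thesis by (simp add: v_def prod.distrib cnj_prod)
  qed
  have "mtrace (\<rho> * ptensor n (\<lambda>i. pauli_proj (B!i) (s!i)))
      = (\<Sum>r<2^n. \<Sum>c<2^n. \<rho> $$ (r,c) * (v c * cnj (v r)))"
    unfolding mtrace_mult_ptensor[OF A] by (simp only: rank_one)
  also have "\<dots> = conjugate (Matrix.vec (2^n) v) \<bullet> (\<rho> *\<^sub>v Matrix.vec (2^n) v)"
    using A by (auto simp: scalar_prod_def atLeast0LessThan sum_distrib_left algebra_simps
        intro!: sum.cong)
  finally show ?thesis
    using rho lB by (simp add: density_matrix_def outcome_prob_pauli_proj)
qed

lemma mu_eq_prod:
  "complex_of_real (mu s (supp P)) = (\<Prod>i<length P. if i \<in> supp P then of_int (s!i) else 1)"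
proof -
  have "supp P = {..<length P} \<inter> supp P" by (auto simp: supp_def)
  then show ?thesis by (simp add: mu_def prod.inter_restrict[symmetric])
qed

lemma outcome_prob_mu_sum:
  assumes A: "\<rho> \<in> carrier_mat (2^n) (2^n)" and P: "length P = n" and B: "B \<in> Lift P"
  shows "(\<Sum>s\<in>outcomes n. outcome_prob \<rho> B s * mu s (supp P)) = Re (mtrace (pauli_op P * \<rho>))"
proof -
  let ?g = "\<lambda>i t. if i \<in> supp P then complex_of_int t else 1"
  have lB: "length B = n" using B P by (simp add: Lift_def bases_def)
  have factor: "(\<Sum>t\<in>{-1,1}. ?g i t * pauli_proj (B!i) t $$ (a,b)) = pauli_mat (P!i) $$ (a,b)"
    if "i < n" "a < 2" "b < 2" for i a b
  proof (cases "i \<in> supp P")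
    case True
    then have "B!i = P!i" using B by (simp add: Lift_def)
    then show ?thesis using True that by (simp only: if_True sum_signed_pauli_proj)
  next
    case False
    then have "P!i = PI" using that P by (simp add: supp_def)
    then show ?thesis using False that by (simp only: if_False mult_1 sum_pauli_proj pauli_mat_PI)
  qed
  have "(\<Sum>s\<in>outcomes n. (\<Prod>i<n. ?g i (s!i)) * mtrace (\<rho> * ptensor n (\<lambda>i. pauli_proj (B!i) (s!i))))
      = mtrace (\<rho> * pauli_op P)"
    unfolding pauli_op_def P by (rule sum_outcomes_mtrace_ptensor[OF A factor])
  also have "\<dots> = mtrace (pauli_op P * \<rho>)"
    using A P by (intro mtrace_mult_comm) (auto simp: pauli_op_def ptensor_carrier)
  finally have "(\<Sum>s\<in>outcomes n. complex_of_real (mu s (supp P))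
      * mtrace (\<rho> * ptensor n (\<lambda>i. pauli_proj (B!i) (s!i)))) = mtrace (pauli_op P * \<rho>)"
    by (simp only: mu_eq_prod P)
  moreover have "(\<Sum>s\<in>outcomes n. outcome_prob \<rho> B s * mu s (supp P))
      = Re (\<Sum>s\<in>outcomes n. complex_of_real (mu s (supp P))
          * mtrace (\<rho> * ptensor n (\<lambda>i. pauli_proj (B!i) (s!i))))"
    unfolding Re_sum outcome_prob_pauli_proj lB by (simp add: mult.commute[of _ "mu _ _"])
  ultimately show ?thesis by simp
qed

lemma cnj_pauli_mat_index: "a < 2 \<Longrightarrow> b < 2 \<Longrightarrow> cnj (pauli_mat p $$ (a,b)) = pauli_mat p $$ (b,a)"
proof -
  assume "a < 2" "b < 2"
  then have "a = 0 \<or> a = 1" "b = 0 \<or> b = 1" by auto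
  then show ?thesis by (cases p) (auto simp: pauli_mat_def)
qed

lemma mtrace_pauli_op_real:
  assumes rho: "density_matrix n \<rho>" and P: "length P = n"
  shows "mtrace (pauli_op P * \<rho>) = complex_of_real (Re (mtrace (pauli_op P * \<rho>)))"
proof -
  have A: "\<rho> \<in> carrier_mat (2^n) (2^n)" and herm: "mat_adjoint \<rho> = \<rho>"
    using rho by (auto simp: density_matrix_def)
  have AP: "pauli_op P \<in> carrier_mat (2^n) (2^n)" using P by (simp add: pauli_op_def ptensor_carrier)
  have cnj_rho: "cnj (\<rho> $$ (c,r)) = \<rho> $$ (r,c)" if "r < 2^n" "c < 2^n" for r c
  proof -
    have "mat_adjoint \<rho> $$ (r,c) = cnj (\<rho> $$ (c,r))"
      using A that by (simp add: mat_adjoint_def mat_of_rows_index)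
    then show ?thesis using herm by simp
  qed
  have cnj_P: "cnj (pauli_op P $$ (r,c)) = pauli_op P $$ (c,r)" if "r < 2^n" "c < 2^n" for r c
    using that P by (simp add: pauli_op_def ptensor_index cnj_prod cnj_pauli_mat_index)
  have "cnj (mtrace (pauli_op P * \<rho>)) = (\<Sum>r<2^n. \<Sum>c<2^n. pauli_op P $$ (c,r) * \<rho> $$ (r,c))"
    by (simp add: mtrace_mult[OF AP A] cnj_P cnj_rho)
  also have "\<dots> = mtrace (pauli_op P * \<rho>)"
    by (simp only: mtrace_mult[OF AP A]) (rule sum.swap)
  finally show ?thesis by (simp add: complex_eq_iff)
qed

definition measurement_pmf :: "complex mat \<Rightarrow> nat \<Rightarrow> pauli list \<Rightarrow> int list pmf" where
  "measurement_pmf \<rho> n B = embed_pmf (\<lambda>s. if s \<in> outcomes n then outcome_prob \<rho> B s else 0)"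

lemma pmf_measurement_pmf:
  assumes rho: "density_matrix n \<rho>" and B: "B \<in> bases n"
  shows "pmf (measurement_pmf \<rho> n B) s = (if s \<in> outcomes n then outcome_prob \<rho> B s else 0)"
  unfolding measurement_pmf_def
proof (rule pmf_embed_pmf)
  let ?f = "\<lambda>s. if s \<in> outcomes n then outcome_prob \<rho> B s else 0"
  have lB: "length B = n" using B by (simp add: bases_def)
  show nonneg: "0 \<le> ?f s" for s using outcome_prob_nonneg[OF rho B] by simp
  have "(\<integral>\<^sup>+ s. ennreal (?f s) \<partial>count_space UNIV) = (\<Sum>s\<in>outcomes n. ennreal (?f s))"
    by (rule nn_integral_count_space') (auto simp: finite_outcomes)
  also have "\<dots> = ennreal (\<Sum>s\<in>outcomes n. ?f s)"
    by (intro sum_ennreal nonneg)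
  also have "(\<Sum>s\<in>outcomes n. ?f s) = 1"
    using sum_outcome_prob[OF rho lB] by simp
  finally show "(\<integral>\<^sup>+ s. ennreal (?f s) \<partial>count_space UNIV) = 1" by simp
qed

lemma set_measurement_pmf:
  "density_matrix n \<rho> \<Longrightarrow> B \<in> bases n \<Longrightarrow> set_pmf (measurement_pmf \<rho> n B) \<subseteq> outcomes n"
  by (auto simp: set_pmf_iff pmf_measurement_pmf split: if_splits)

lemma expectation_mu_measurement_pmf:
  assumes rho: "density_matrix n \<rho>" and P: "length P = n" and B: "B \<in> Lift P"
  shows "measure_pmf.expectation (measurement_pmf \<rho> n B) (\<lambda>s. mu s (supp P))
    = Re (mtrace (pauli_op P * \<rho>))"
proof -
  have A: "\<rho> \<in> carrier_mat (2^n) (2^n)" using rho by (auto simp: density_matrix_def)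
  have Bb: "B \<in> bases n" using B P by (simp add: Lift_def)
  have "measure_pmf.expectation (measurement_pmf \<rho> n B) (\<lambda>s. mu s (supp P))
      = (\<Sum>s\<in>outcomes n. pmf (measurement_pmf \<rho> n B) s *\<^sub>R mu s (supp P))"
    using set_measurement_pmf[OF rho Bb] by (intro integral_measure_pmf) (auto simp: finite_outcomes)
  also have "\<dots> = (\<Sum>s\<in>outcomes n. outcome_prob \<rho> B s * mu s (supp P))"
    by (simp add: pmf_measurement_pmf[OF rho Bb])
  also have "\<dots> = Re (mtrace (pauli_op P * \<rho>))" by (rule outcome_prob_mu_sum[OF A P B])
  finally show ?thesis .
qed

lemma abs_mu_outcomes:
  assumes "s \<in> outcomes n" "A \<subseteq> {..<n}"
  shows "\<bar>mu s A\<bar> = 1"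
proof -
  have "\<bar>real_of_int (s!i)\<bar> = 1" if "i \<in> A" for i
  proof -
    have "s!i \<in> set s" using assms that by (auto simp: outcomes_def)
    then show ?thesis using assms by (auto simp: outcomes_def)
  qed
  then show ?thesis by (simp add: mu_def abs_prod)
qed

text \<open>The default value \<^const>\<open>undefined\<close> makes the support of the product measure consist of
  the extensional functions over which \<^const>\<open>INCONF\<close> sums.\<close>

lemma set_Pi_measurement_pmf:
  fixes M :: nat
  assumes rho: "density_matrix n \<rho>" and Bs: "\<forall>m<M. Bs m \<in> bases n"
  shows "set_pmf (Pi_pmf {..<M} undefined (\<lambda>m. measurement_pmf \<rho> n (Bs m)))
    \<subseteq> PiE {..<M} (\<lambda>_. outcomes n)"
proof
  fix ss assume "ss \<in> set_pmf (Pi_pmf {..<M} undefined (\<lambda>m. measurement_pmf \<rho> n (Bs m)))"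
  then have "ss \<in> PiE_dflt {..<M} undefined (\<lambda>m. set_pmf (measurement_pmf \<rho> n (Bs m)))"
    using set_Pi_pmf[of "{..<M}" undefined "\<lambda>m. measurement_pmf \<rho> n (Bs m)"] by (simp add: comp_def)
  then show "ss \<in> PiE {..<M} (\<lambda>_. outcomes n)"
    using set_measurement_pmf[OF rho] Bs by (auto simp: PiE_dflt_def PiE_def extensional_def)
qed

lemma Pi_pmf_sum_deviation_le:
  fixes f :: "'b \<Rightarrow> real" and D :: "'a \<Rightarrow> 'b pmf"
  assumes I: "finite I" and J: "J \<subseteq> I"
    and range: "\<And>i x. i \<in> J \<Longrightarrow> x \<in> set_pmf (D i) \<Longrightarrow> f x \<in> {-1..1}"
    and mean: "\<And>i. i \<in> J \<Longrightarrow> measure_pmf.expectation (D i) f = \<mu>"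
    and eps: "0 \<le> eps"
  shows "measure_pmf.prob (Pi_pmf I d D)
      {ss. real (card J) * eps \<le> \<bar>(\<Sum>i\<in>J. f (ss i)) - real (card J) * \<mu>\<bar>}
    \<le> 2 * exp (- (eps\<^sup>2) / 2) ^ card J"
proof (cases "J = {}")
  case True
  then show ?thesis using measure_pmf.prob_le_1 by (simp add: order_trans[of _ 1 2])
next
  case False
  define Q where "Q = Pi_pmf I d D"
  define X where "X i ss = f (ss i)" for i and ss :: "'a \<Rightarrow> 'b"
  define k where "k = card J"
  have finJ: "finite J" using finite_subset[OF J I] .
  then have k: "0 < k" using False by (simp add: k_def card_gt_0_iff)
  have "prob_space.indep_vars (measure_pmf Q) (\<lambda>_. count_space UNIV) (\<lambda>i ss. ss i) I"
    unfolding Q_def by (rule indep_vars_Pi_pmf[OF I])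
  then have "prob_space.indep_vars (measure_pmf Q) (\<lambda>_. count_space UNIV) (\<lambda>i ss. ss i) J"
    by (rule prob_space.indep_vars_subset[OF prob_space_measure_pmf _ J])
  then have indep: "prob_space.indep_vars (measure_pmf Q) (\<lambda>_. borel) X J"
    unfolding X_def by (rule prob_space.indep_vars_compose2[OF prob_space_measure_pmf]) simp
  have component: "map_pmf (\<lambda>ss. ss i) Q = D i" if "i \<in> J" for i
    using that J unfolding Q_def by (subst Pi_pmf_component[OF I]) auto
  interpret Hoeffding_ineq "measure_pmf Q" J X "\<lambda>_. -1" "\<lambda>_. 1"
    "\<Sum>i\<in>J. measure_pmf.expectation Q (X i)"
  proof unfold_locales
    show "finite J" by (rule finJ)
    show "prob_space.indep_vars (measure_pmf Q) (\<lambda>_. borel) X J" by (rule indep)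
    fix i assume i: "i \<in> J"
    show "AE ss in measure_pmf Q. X i ss \<in> {- 1..1}"
    proof (rule AE_pmfI)
      fix ss assume "ss \<in> set_pmf Q"
      then have "ss i \<in> set_pmf (D i)" using component[OF i] by (metis pmf.set_map imageI)
      then show "X i ss \<in> {- 1..1}" unfolding X_def by (rule range[OF i])
    qed
  qed simp
  have "measure_pmf.expectation Q (X i) = \<mu>" if "i \<in> J" for i
  proof -
    have "measure_pmf.expectation Q (X i) = measure_pmf.expectation (map_pmf (\<lambda>ss. ss i) Q) f"
      by (simp add: X_def[abs_def] integral_map_pmf)
    then show ?thesis using that by (simp add: component mean)
  qed
  then have "(\<Sum>i\<in>J. measure_pmf.expectation Q (X i)) = k * \<mu>"
    by (simp add: k_def)
  moreover have "(\<Sum>i\<in>J. (1 - (-1::real))\<^sup>2) = 4 * k" by (simp add: k_def)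
  ultimately have "measure_pmf.prob Q {ss. k * eps \<le> \<bar>(\<Sum>i\<in>J. X i ss) - k * \<mu>\<bar>}
      \<le> 2 * exp (-2 * (k * eps)\<^sup>2 / (4 * k))"
    using Hoeffding_ineq_abs_ge[of "k * eps"] k eps by simp
  also have "-2 * (k * eps)\<^sup>2 / (4 * k) = k * (- (eps\<^sup>2) / 2)"
    using k by (simp add: power2_eq_square field_simps)
  also have "exp (k * (- (eps\<^sup>2) / 2)) = exp (- (eps\<^sup>2) / 2) ^ k"
    by (rule exp_of_nat_mult)
  finally show ?thesis by (simp add: Q_def X_def k_def)
qed

lemma w_hat_deviation_prob_le:
  fixes M :: nat
  assumes rho: "density_matrix n \<rho>" and Bs: "\<forall>m<M. Bs m \<in> bases n"
    and P: "length P = n" and eps: "0 \<le> eps"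
  shows "measure_pmf.prob (Pi_pmf {..<M} undefined (\<lambda>m. measurement_pmf \<rho> n (Bs m)))
      {ss. eps \<le> cmod (complex_of_real (w_hat M Bs ss P) - mtrace (pauli_op P * \<rho>))}
    \<le> 2 * exp (- (eps\<^sup>2) / 2) ^ lift_count M Bs P"
proof -
  define J where "J = {m \<in> {..<M}. Bs m \<in> Lift P}"
  define w where "w = Re (mtrace (pauli_op P * \<rho>))"
  define S where "S ss = (\<Sum>m\<in>J. mu (ss m) (supp P))" for ss :: "nat \<Rightarrow> int list"
  let ?Q = "Pi_pmf {..<M} undefined (\<lambda>m. measurement_pmf \<rho> n (Bs m))"
  have count: "lift_count M Bs P = card J" by (simp add: lift_count_def J_def)
  have wr: "mtrace (pauli_op P * \<rho>) = complex_of_real w"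
    using mtrace_pauli_op_real[OF rho P] by (simp add: w_def)
  have "{ss. eps \<le> cmod (complex_of_real (w_hat M Bs ss P) - mtrace (pauli_op P * \<rho>))}
      \<subseteq> {ss. real (card J) * eps \<le> \<bar>S ss - real (card J) * w\<bar>}"
  proof safe
    fix ss assume dev: "eps \<le> cmod (complex_of_real (w_hat M Bs ss P) - mtrace (pauli_op P * \<rho>))"
    show "real (card J) * eps \<le> \<bar>S ss - real (card J) * w\<bar>"
    proof (cases "card J = 0")
      case False
      have "S ss = card J * w_hat M Bs ss P"
        using False by (auto simp: w_hat_def count S_def J_def)
      then have "\<bar>S ss - real (card J) * w\<bar> = card J * \<bar>w_hat M Bs ss P - w\<bar>"
        by (simp add: abs_mult flip: right_diff_distrib)
      moreover have "eps \<le> \<bar>w_hat M Bs ss P - w\<bar>"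
        using dev by (simp add: wr flip: of_real_diff)
      ultimately show ?thesis by (simp add: mult_left_mono)
    qed simp
  qed
  then have "measure_pmf.prob ?Q {ss. eps \<le> cmod (complex_of_real (w_hat M Bs ss P) - mtrace (pauli_op P * \<rho>))}
      \<le> measure_pmf.prob ?Q {ss. real (card J) * eps \<le> \<bar>S ss - real (card J) * w\<bar>}"
    by (rule measure_pmf.finite_measure_mono) simp
  also have "\<dots> \<le> 2 * exp (- (eps\<^sup>2) / 2) ^ card J"
    unfolding S_def
  proof (rule Pi_pmf_sum_deviation_le[OF _ _ _ _ eps])
    fix m s assume m: "m \<in> J" and s: "s \<in> set_pmf (measurement_pmf \<rho> n (Bs m))"
    have "s \<in> outcomes n" using set_measurement_pmf[OF rho] s m Bs by (auto simp: J_def)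
    moreover have "supp P \<subseteq> {..<n}" using P by (auto simp: supp_def)
    ultimately have "\<bar>mu s (supp P)\<bar> = 1" by (rule abs_mu_outcomes)
    then show "mu s (supp P) \<in> {-1..1}" by (auto simp: abs_eq_iff')
  next
    fix m assume "m \<in> J"
    then show "measure_pmf.expectation (measurement_pmf \<rho> n (Bs m)) (\<lambda>s. mu s (supp P)) = w"
      unfolding w_def J_def by (intro expectation_mu_measurement_pmf[OF rho P]) simp
  qed (auto simp: J_def)
  finally show ?thesis by (simp add: count)
qed

lemma INCONF_eq_prob:
  fixes M :: nat
  assumes rho: "density_matrix n \<rho>" and Bs: "\<forall>m<M. Bs m \<in> bases n"
  shows "INCONF n \<rho> L Ps eps M Bs
    = measure_pmf.prob (Pi_pmf {..<M} undefined (\<lambda>m. measurement_pmf \<rho> n (Bs m)))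
        {ss. eps \<le> (MAX l\<in>{..<L}. cmod (complex_of_real (w_hat M Bs ss (Ps l)) - mtrace (pauli_op (Ps l) * \<rho>)))}"
    (is "_ = measure_pmf.prob ?Q ?E")
proof -
  let ?\<Omega> = "PiE {..<M} (\<lambda>_. outcomes n)"
  have fin: "finite ?\<Omega>" by (intro finite_PiE) (auto simp: finite_outcomes)
  have pmf_Q: "pmf ?Q ss = (\<Prod>m<M. outcome_prob \<rho> (Bs m) (ss m))" if "ss \<in> ?\<Omega>" for ss
    using that Bs by (auto simp: pmf_Pi pmf_measurement_pmf[OF rho] PiE_def extensional_def
        intro!: prod.cong)
  have "measure_pmf.prob ?Q ?E = measure_pmf.expectation ?Q (indicator ?E)" by simp
  also have "\<dots> = (\<Sum>ss\<in>?\<Omega>. pmf ?Q ss *\<^sub>R indicator ?E ss)"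
    using set_Pi_measurement_pmf[OF rho Bs] by (intro integral_measure_pmf[OF fin]) auto
  also have "\<dots> = INCONF n \<rho> L Ps eps M Bs"
    unfolding INCONF_def by (intro sum.cong refl) (simp add: pmf_Q indicator_def)
  finally show ?thesis ..
qed

lemma INCONF_le:
  fixes M :: nat
  assumes rho: "density_matrix n \<rho>" and Bs: "\<forall>m<M. Bs m \<in> bases n"
    and L: "0 < L" and Ps: "\<forall>l<L. length (Ps l) = n" and eps: "0 \<le> eps"
  shows "INCONF n \<rho> L Ps eps M Bs \<le> (\<Sum>l<L. 2 * exp (- (eps\<^sup>2) / 2) ^ lift_count M Bs (Ps l))"
proof -
  let ?Q = "Pi_pmf {..<M} undefined (\<lambda>m. measurement_pmf \<rho> n (Bs m))"
  let ?dev = "\<lambda>l ss. cmod (complex_of_real (w_hat M Bs ss (Ps l)) - mtrace (pauli_op (Ps l) * \<rho>))"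
  have "eps \<le> (MAX l\<in>{..<L}. ?dev l ss) \<longleftrightarrow> (\<exists>l<L. eps \<le> ?dev l ss)" for ss
    using L by (subst Max_ge_iff) auto
  then have "{ss. eps \<le> (MAX l\<in>{..<L}. ?dev l ss)} = (\<Union>l<L. {ss. eps \<le> ?dev l ss})"
    by auto
  then have "INCONF n \<rho> L Ps eps M Bs = measure_pmf.prob ?Q (\<Union>l<L. {ss. eps \<le> ?dev l ss})"
    by (simp add: INCONF_eq_prob[OF rho Bs])
  also have "\<dots> \<le> (\<Sum>l<L. measure_pmf.prob ?Q {ss. eps \<le> ?dev l ss})"
    by (rule measure_pmf.finite_measure_subadditive_finite) auto
  also have "\<dots> \<le> (\<Sum>l<L. 2 * exp (- (eps\<^sup>2) / 2) ^ lift_count M Bs (Ps l))"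
    using Ps by (intro sum_mono w_hat_deviation_prob_le[OF rho Bs _ eps]) auto
  finally show ?thesis .
qed

lemma finite_bases: "finite (bases n)"
proof -
  have "bases n = {xs. set xs \<subseteq> {PX,PY,PZ} \<and> length xs = n}" by (auto simp: bases_def)
  then show ?thesis using finite_lists_length_eq[of "{PX,PY,PZ}" n] by simp
qed

lemma zeta_eq_prob: "zeta P \<beta> = measure_pmf.prob \<beta> (Lift P)"
proof -
  have "Lift P \<subseteq> bases (length P)" by (auto simp: Lift_def)
  then show ?thesis
    by (simp add: zeta_def measure_measure_pmf_finite finite_subset[OF _ finite_bases])
qed

lemma expectation_power_lift_count:
  fixes M :: nat
  assumes beta: "set_pmf \<beta> \<subseteq> bases n" and q: "0 \<le> q"
  shows "measure_pmf.expectation (Pi_pmf {..<M} d (\<lambda>_. \<beta>)) (\<lambda>Bs. q ^ lift_count M Bs P)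
    = (1 - (1 - q) * zeta P \<beta>) ^ M"
proof -
  have fin: "finite (set_pmf \<beta>)" using finite_subset[OF beta finite_bases] .
  have "(\<lambda>Bs. q ^ lift_count M Bs P) = (\<lambda>Bs. \<Prod>m<M. if Bs m \<in> Lift P then q else 1)"
    by (simp add: lift_count_def flip: prod.inter_filter)
  then have "measure_pmf.expectation (Pi_pmf {..<M} d (\<lambda>_. \<beta>)) (\<lambda>Bs. q ^ lift_count M Bs P)
      = (\<Prod>m<M. measure_pmf.expectation \<beta> (\<lambda>B. if B \<in> Lift P then q else 1))"
    by (simp only:) (rule expectation_prod_Pi_pmf, auto simp: integrable_measure_pmf_finite[OF fin] q)
  also have "measure_pmf.expectation \<beta> (\<lambda>B. if B \<in> Lift P then q else 1)
      = 1 - (1 - q) * measure_pmf.prob \<beta> (Lift P)"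
  proof -
    have "(\<lambda>B. if B \<in> Lift P then q else 1) = (\<lambda>B. 1 - (1 - q) * indicator (Lift P) B)"
      by (auto simp: indicator_def)
    then show ?thesis by (simp add: integrable_measure_pmf_finite[OF fin])
  qed
  finally show ?thesis by (simp add: zeta_eq_prob)
qed

lemma expectation_INCONF_le:
  fixes M :: nat
  assumes rho: "density_matrix n \<rho>" and L: "0 < L" and Ps: "\<forall>l<L. length (Ps l) = n"
    and beta: "set_pmf \<beta> \<subseteq> bases n" and eps: "0 \<le> eps"
  shows "measure_pmf.expectation (Pi_pmf {..<M} d (\<lambda>_. \<beta>)) (INCONF n \<rho> L Ps eps M)
    \<le> 2 * (\<Sum>l<L. (1 - (1 - exp (- (eps\<^sup>2) / 2)) * zeta (Ps l) \<beta>) ^ M)"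
proof -
  let ?R = "Pi_pmf {..<M} d (\<lambda>_. \<beta>)"
  let ?q = "exp (- (eps\<^sup>2) / 2)"
  have "finite (PiE_dflt {..<M} d (\<lambda>_. set_pmf \<beta>))"
    using finite_subset[OF beta finite_bases] by (intro finite_PiE_dflt) auto
  then have fin: "finite (set_pmf ?R)" by (simp add: set_Pi_pmf comp_def)
  have Bs: "\<forall>m<M. Bs m \<in> bases n" if "Bs \<in> set_pmf ?R" for Bs
    using that beta by (auto simp: set_Pi_pmf PiE_dflt_def)
  have "measure_pmf.expectation ?R (INCONF n \<rho> L Ps eps M)
      \<le> measure_pmf.expectation ?R (\<lambda>Bs. \<Sum>l<L. 2 * ?q ^ lift_count M Bs (Ps l))"
    by (intro integral_mono_AE integrable_measure_pmf_finite[OF fin] AE_pmfI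
        INCONF_le[OF rho Bs L Ps eps])
  also have "\<dots> = (\<Sum>l<L. 2 * measure_pmf.expectation ?R (\<lambda>Bs. ?q ^ lift_count M Bs (Ps l)))"
    by (simp add: integrable_measure_pmf_finite[OF fin])
  also have "\<dots> = 2 * (\<Sum>l<L. (1 - (1 - ?q) * zeta (Ps l) \<beta>) ^ M)"
    by (simp add: expectation_power_lift_count[OF beta] sum_distrib_left)
  finally show ?thesis .
qed

lemma one_minus_power_le_exp:
  fixes x :: real
  assumes "x \<le> 1"
  shows "(1 - x) ^ M \<le> exp (- x * M)"
proof -
  have "(1 - x) ^ M \<le> exp (- x) ^ M"
    using assms exp_ge_add_one_self[of "- x"] by (intro power_mono) auto
  then show ?thesis by (simp add: exp_of_nat_mult[symmetric] mult.commute)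
qed

lemma sum_exp_le_of_sample_size:
  fixes z :: "nat \<Rightarrow> real"
  assumes L: "0 < L" and delta: "0 < delta" "delta < 1" and eta: "0 < eta"
    and z: "\<forall>l<L. 0 < z l"
    and M: "ln (2 * real L / delta) / eta * (MAX l\<in>{..<L}. 1 / z l) \<le> real M"
  shows "2 * (\<Sum>l<L. exp (- eta * z l * real M)) \<le> delta"
proof -
  have ln_pos: "0 < ln (2 * real L / delta)" using L delta by (simp add: ln_gt_zero_iff field_simps)
  have "exp (- eta * z l * real M) \<le> delta / (2 * real L)" if l: "l < L" for l
  proof -
    have "1 / z l \<le> (MAX l\<in>{..<L}. 1 / z l)" using l by (intro Max_ge) auto
    then have "ln (2 * real L / delta) / eta * (1 / z l) \<le> real M"
      using M ln_pos eta by (smt (verit) divide_pos_pos mult_left_mono)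
    then have "ln (2 * real L / delta) \<le> eta * z l * real M"
      using eta z l by (simp add: field_simps)
    then have "exp (- eta * z l * real M) \<le> exp (- ln (2 * real L / delta))" by simp
    also have "\<dots> = delta / (2 * real L)" using L delta by (simp add: exp_minus inverse_eq_divide)
    finally show ?thesis .
  qed
  then have "(\<Sum>l<L. exp (- eta * z l * real M)) \<le> (\<Sum>l<L. delta / (2 * real L))"
    by (intro sum_mono) auto
  also have "\<dots> = delta / 2" using L by simp
  finally show ?thesis by simp
qed

theorem mainTheorem5:
  fixes n L M :: nat and \<rho> :: "complex mat" and Ps :: "nat \<Rightarrow> pauli list"
    and \<beta> :: "pauli list pmf" and eps delta eta :: real
  assumes rho: "density_matrix n \<rho>"
    and L: "0 < L"
    and Ps: "\<forall>l<L. length (Ps l) = n"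
    and beta: "set_pmf \<beta> \<subseteq> bases n"
    and zeta_pos: "\<forall>l<L. zeta (Ps l) \<beta> > 0"
    and eps_bd: "0 < eps" "eps < 1"
    and delta_bd: "0 < delta" "delta < 1"
    and eta_def: "eta = 1 - exp (- (eps\<^sup>2) / 2)"
  shows "measure_pmf.expectation (Pi_pmf {..<M} [] (\<lambda>_. \<beta>)) (INCONF n \<rho> L Ps eps M)
           \<le> 2 * (\<Sum>l<L. (1 - eta * zeta (Ps l) \<beta>) ^ M)
         \<and> 2 * (\<Sum>l<L. (1 - eta * zeta (Ps l) \<beta>) ^ M) \<le> 2 * (\<Sum>l<L. exp (- eta * zeta (Ps l) \<beta> * real M))
         \<and> (real M \<ge> ln (2 * real L / delta) / eta * (MAX l\<in>{..<L}. 1 / zeta (Ps l) \<beta>) \<longrightarrow>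
              measure_pmf.expectation (Pi_pmf {..<M} [] (\<lambda>_. \<beta>)) (INCONF n \<rho> L Ps eps M) \<le> delta)"
proof -
  have eta: "0 < eta" "eta \<le> 1" using eps_bd by (simp_all add: eta_def)
  have expectation: "measure_pmf.expectation (Pi_pmf {..<M} [] (\<lambda>_. \<beta>)) (INCONF n \<rho> L Ps eps M)
      \<le> 2 * (\<Sum>l<L. (1 - eta * zeta (Ps l) \<beta>) ^ M)"
    using expectation_INCONF_le[OF rho L Ps beta] eps_bd by (simp add: eta_def)
  have "eta * zeta (Ps l) \<beta> \<le> 1" for l
    using eta zeta_eq_prob[of "Ps l" \<beta>] by (simp add: mult_le_one)
  then have "(1 - eta * zeta (Ps l) \<beta>) ^ M \<le> exp (- eta * zeta (Ps l) \<beta> * real M)" for l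
    using one_minus_power_le_exp[of "eta * zeta (Ps l) \<beta>" M] by simp
  then have exp_bound: "2 * (\<Sum>l<L. (1 - eta * zeta (Ps l) \<beta>) ^ M)
      \<le> 2 * (\<Sum>l<L. exp (- eta * zeta (Ps l) \<beta> * real M))"
    by (simp add: sum_mono)
  moreover have "measure_pmf.expectation (Pi_pmf {..<M} [] (\<lambda>_. \<beta>)) (INCONF n \<rho> L Ps eps M) \<le> delta"
    if "ln (2 * real L / delta) / eta * (MAX l\<in>{..<L}. 1 / zeta (Ps l) \<beta>) \<le> real M"
    using expectation exp_bound sum_exp_le_of_sample_size[OF L delta_bd eta(1) zeta_pos that]
    by linarith
  ultimately show ?thesis using expectation by blast
qed

end
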